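(* For any graph function $\alpha$ on a strongly connected digraph $G$, $\max_v y_v=0$.
   Context: $G$ is a strongly connected directed graph (self-loops allowed); a graph function assigns a real weight $\alpha_{uv}$ to each edge. $\alpha_v^{\text{in}}=\max_{u:(u,v)\in G}\alpha_{uv}$, $\alpha_v^{\text{out}}=\max_{w:(v,w)\in G}\alpha_{vw}$, $\rho^R_v=\max\{0,\alpha_v^{\text{out}}-\alpha_v^{\text{in}}\}$. A raising operation at $v$: if $\rho^R_v>0$ add $\rho^R_v/2$ to each incoming edge weight $\alpha_{uv}$ ($u\ne v$) and subtract it from each outgoing $\alpha_{vw}$ ($w\neq v$); otherwise do nothing. Starting from $\alpha$, for any infinite sequence of raising operations in which every vertex occurs infinitely often, the cumulative amount $r_v(t)$ by which each vertex has been raised converges to a limit vector $r^*$ independent of the sequence. The heights are $y_v=-r^*_v$. *)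

theory Defs
  imports Complex_Main
begin

text \<open>A digraph is a finite vertex set V with an edge relation E \<subseteq> V \<times> V
  (self-loops allowed). A graph function is a weight alpha u v for each edge (u,v);
  values off E are irrelevant.\<close>

definition strongly_connected :: "'a set \<Rightarrow> ('a \<times> 'a) set \<Rightarrow> bool" where
  "strongly_connected V E \<longleftrightarrow> V \<noteq> {} \<and> E \<subseteq> V \<times> V \<and> (\<forall>u\<in>V. \<forall>v\<in>V. (u, v) \<in> E\<^sup>+)"

definition alpha_in :: "('a \<times> 'a) set \<Rightarrow> ('a \<Rightarrow> 'a \<Rightarrow> real) \<Rightarrow> 'a \<Rightarrow> real" where
  "alpha_in E \<alpha> v = Max {\<alpha> u v | u. (u, v) \<in> E}"

definition alpha_out :: "('a \<times> 'a) set \<Rightarrow> ('a \<Rightarrow> 'a \<Rightarrow> real) \<Rightarrow> 'a \<Rightarrow> real" where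
  "alpha_out E \<alpha> v = Max {\<alpha> v w | w. (v, w) \<in> E}"

definition rhoR :: "('a \<times> 'a) set \<Rightarrow> ('a \<Rightarrow> 'a \<Rightarrow> real) \<Rightarrow> 'a \<Rightarrow> real" where
  "rhoR E \<alpha> v = max 0 (alpha_out E \<alpha> v - alpha_in E \<alpha> v)"

definition raise_op :: "('a \<times> 'a) set \<Rightarrow> ('a \<Rightarrow> 'a \<Rightarrow> real) \<Rightarrow> 'a \<Rightarrow> ('a \<Rightarrow> 'a \<Rightarrow> real)" where
  "raise_op E \<alpha> v = (\<lambda>a b. \<alpha> a b
      + (if b = v \<and> a \<noteq> v then rhoR E \<alpha> v / 2 else 0)
      - (if a = v \<and> b \<noteq> v then rhoR E \<alpha> v / 2 else 0))"

primrec alpha_seq :: "('a \<times> 'a) set \<Rightarrow> ('a \<Rightarrow> 'a \<Rightarrow> real) \<Rightarrow> (nat \<Rightarrow> 'a) \<Rightarrow> nat \<Rightarrow> ('a \<Rightarrow> 'a \<Rightarrow> real)" where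
  "alpha_seq E \<alpha> \<sigma> 0 = \<alpha>"
| "alpha_seq E \<alpha> \<sigma> (Suc t) = raise_op E (alpha_seq E \<alpha> \<sigma> t) (\<sigma> t)"

primrec raised :: "('a \<times> 'a) set \<Rightarrow> ('a \<Rightarrow> 'a \<Rightarrow> real) \<Rightarrow> (nat \<Rightarrow> 'a) \<Rightarrow> nat \<Rightarrow> 'a \<Rightarrow> real" where
  "raised E \<alpha> \<sigma> 0 = (\<lambda>v. 0)"
| "raised E \<alpha> \<sigma> (Suc t) = (\<lambda>v. raised E \<alpha> \<sigma> t v
      + (if v = \<sigma> t then rhoR E (alpha_seq E \<alpha> \<sigma> t) v / 2 else 0))"

definition fair_seq :: "'a set \<Rightarrow> (nat \<Rightarrow> 'a) \<Rightarrow> bool" where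
  "fair_seq V \<sigma> \<longleftrightarrow> (\<forall>t. \<sigma> t \<in> V) \<and> (\<forall>v\<in>V. \<forall>n. \<exists>t\<ge>n. \<sigma> t = v)"

end

theory Submission
  imports Defs
begin

text \<open>After raising vertex v by r v in total, the weight of an edge (a,b) with a \<noteq> b has become
  \<alpha> a b + r b - r a, so the iterates are reweightings of \<alpha> by a potential. The limit potential
  r* is balanced (no vertex can be raised any more), and so is r* - min r*, which is nonnegative.
  A raising step never overshoots a nonnegative balanced potential, hence every r(t), and thus
  r*, lies below r* - min r*; so min r* \<le> 0, while r* \<ge> 0 since raising amounts are nonnegative.
  Strong connectivity is needed only to give every vertex an incoming and an outgoing edge.\<close>

definition reweight :: "('a \<Rightarrow> 'a \<Rightarrow> real) \<Rightarrow> ('a \<Rightarrow> real) \<Rightarrow> 'a \<Rightarrow> 'a \<Rightarrow> real" where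
  "reweight \<alpha> r a b = \<alpha> a b + (if a = b then 0 else r b - r a)"

definition balanced_on :: "'a set \<Rightarrow> ('a \<times> 'a) set \<Rightarrow> ('a \<Rightarrow> 'a \<Rightarrow> real) \<Rightarrow> bool" where
  "balanced_on V E \<beta> \<longleftrightarrow> (\<forall>v\<in>V. alpha_out E \<beta> v \<le> alpha_in E \<beta> v)"

lemma reweight_diff_const [simp]: "reweight \<alpha> (\<lambda>u. r u - c) = reweight \<alpha> r"
  by (auto simp: reweight_def fun_eq_iff)

lemma reweight_le_add:
  assumes "r b - r a \<le> s b - s a + d" and "0 \<le> d"
  shows "reweight \<alpha> r a b \<le> reweight \<alpha> s a b + d"
  using assms by (auto simp: reweight_def)

lemma alpha_seq_eq_reweight: "alpha_seq E \<alpha> \<sigma> t = reweight \<alpha> (raised E \<alpha> \<sigma> t)"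
  by (induction t) (auto simp: reweight_def fun_eq_iff raise_op_def)

lemma rhoR_nonneg: "0 \<le> rhoR E \<beta> v"
  unfolding rhoR_def by simp

lemma incseq_raised: "incseq (\<lambda>t. raised E \<alpha> \<sigma> t v)"
  by (rule incseq_SucI) (simp add: rhoR_nonneg)

lemma alpha_out_le_add:
  assumes "finite E" and "(v, w\<^sub>0) \<in> E" and "\<And>w. (v, w) \<in> E \<Longrightarrow> \<beta> v w \<le> \<gamma> v w + d"
  shows "alpha_out E \<beta> v \<le> alpha_out E \<gamma> v + d"
proof -
  have fin: "finite {\<delta> v w | w. (v, w) \<in> E}" for \<delta> :: "'a \<Rightarrow> 'a \<Rightarrow> real"
    by (rule finite_subset[OF _ finite_imageI[OF assms(1), of "case_prod \<delta>"]]) force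
  obtain w where w: "(v, w) \<in> E" "alpha_out E \<beta> v = \<beta> v w"
    using Max_in[OF fin[of \<beta>]] assms(2) unfolding alpha_out_def by auto
  have "\<gamma> v w \<le> alpha_out E \<gamma> v"
    unfolding alpha_out_def using fin[of \<gamma>] w(1) by (auto intro: Max_ge)
  then show ?thesis using w assms(3) by fastforce
qed

lemma alpha_in_le_add:
  assumes "finite E" and "(u\<^sub>0, v) \<in> E" and "\<And>u. (u, v) \<in> E \<Longrightarrow> \<beta> u v \<le> \<gamma> u v + d"
  shows "alpha_in E \<beta> v \<le> alpha_in E \<gamma> v + d"
proof -
  have fin: "finite {\<delta> u v | u. (u, v) \<in> E}" for \<delta> :: "'a \<Rightarrow> 'a \<Rightarrow> real"
    by (rule finite_subset[OF _ finite_imageI[OF assms(1), of "case_prod \<delta>"]]) force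
  obtain u where u: "(u, v) \<in> E" "alpha_in E \<beta> v = \<beta> u v"
    using Max_in[OF fin[of \<beta>]] assms(2) unfolding alpha_in_def by auto
  have "\<gamma> u v \<le> alpha_in E \<gamma> v"
    unfolding alpha_in_def using fin[of \<gamma>] u(1) by (auto intro: Max_ge)
  then show ?thesis using u assms(3) by fastforce
qed

lemma strongly_connected_out_edge:
  assumes "strongly_connected V E" and "v \<in> V"
  obtains w where "(v, w) \<in> E"
proof -
  have "(v, v) \<in> E\<^sup>+" using assms unfolding strongly_connected_def by blast
  then show ?thesis using that by (auto dest: tranclD)
qed

lemma strongly_connected_in_edge:
  assumes "strongly_connected V E" and "v \<in> V"
  obtains u where "(u, v) \<in> E"
proof -
  have "(v, v) \<in> E\<^sup>+" using assms unfolding strongly_connected_def by blast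
  then show ?thesis using that by (auto dest: tranclD2)
qed

text \<open>The deficit \<rho> at v is at most twice the gap s v - r v, so raising v cannot overshoot s.\<close>

lemma raise_le_balanced_potential:
  assumes "finite E" "E \<subseteq> V \<times> V" "(v, w\<^sub>0) \<in> E" "(u\<^sub>0, v) \<in> E"
    and le: "\<forall>u\<in>V. r u \<le> s u"
    and bal: "alpha_out E (reweight \<alpha> s) v \<le> alpha_in E (reweight \<alpha> s) v"
  shows "r v + rhoR E (reweight \<alpha> r) v / 2 \<le> s v"
proof -
  define d where "d = s v - r v"
  have "v \<in> V" using assms(2,3) by auto
  then have "0 \<le> d" using le d_def by auto
  have "alpha_out E (reweight \<alpha> r) v \<le> alpha_out E (reweight \<alpha> s) v + d"
    by (rule alpha_out_le_add[OF assms(1,3)], rule reweight_le_add)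
       (use assms(2) le \<open>0 \<le> d\<close> in \<open>auto simp: d_def\<close>)
  moreover have "alpha_in E (reweight \<alpha> s) v \<le> alpha_in E (reweight \<alpha> r) v + d"
    by (rule alpha_in_le_add[OF assms(1,4)], rule reweight_le_add)
       (use assms(2) le \<open>0 \<le> d\<close> in \<open>auto simp: d_def\<close>)
  ultimately have "rhoR E (reweight \<alpha> r) v \<le> 2 * d"
    using bal \<open>0 \<le> d\<close> unfolding rhoR_def by linarith
  then show ?thesis unfolding d_def by simp
qed

lemma alpha_out_minus_alpha_in_reweight_le:
  assumes "finite E" "E \<subseteq> V \<times> V" "(v, w\<^sub>0) \<in> E" "(u\<^sub>0, v) \<in> E"
    and close: "\<forall>u\<in>V. \<bar>r u - s u\<bar> \<le> e"
  shows "alpha_out E (reweight \<alpha> s) v - alpha_in E (reweight \<alpha> s) v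
           \<le> rhoR E (reweight \<alpha> r) v + 4 * e"
proof -
  have "v \<in> V" using assms(2,3) by auto
  then have "0 \<le> e" using close by force
  have shift: "reweight \<alpha> p a b \<le> reweight \<alpha> q a b + 2 * e"
    if "a \<in> V" "b \<in> V" "\<forall>u\<in>V. \<bar>p u - q u\<bar> \<le> e" for p q :: "'a \<Rightarrow> real" and a b
  proof (rule reweight_le_add)
    have "\<bar>p a - q a\<bar> \<le> e" "\<bar>p b - q b\<bar> \<le> e" using that by auto
    then show "p b - p a \<le> q b - q a + 2 * e" by (simp add: abs_le_iff)
  qed (use \<open>0 \<le> e\<close> in simp)
  have close': "\<forall>u\<in>V. \<bar>s u - r u\<bar> \<le> e" using close by (simp add: abs_minus_commute)
  have "alpha_out E (reweight \<alpha> s) v \<le> alpha_out E (reweight \<alpha> r) v + 2 * e"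
    by (rule alpha_out_le_add[OF assms(1,3)], rule shift) (use assms(2) close' in auto)
  moreover have "alpha_in E (reweight \<alpha> r) v \<le> alpha_in E (reweight \<alpha> s) v + 2 * e"
    by (rule alpha_in_le_add[OF assms(1,4)], rule shift) (use assms(2) close in auto)
  ultimately show ?thesis unfolding rhoR_def by linarith
qed

lemma finite_edges: "finite V \<Longrightarrow> strongly_connected V E \<Longrightarrow> finite E"
  unfolding strongly_connected_def by (blast intro: finite_subset finite_cartesian_product)

lemma raised_le_balanced_potential:
  assumes "finite V" "strongly_connected V E"
    and bal: "balanced_on V E (reweight \<alpha> s)" and nonneg: "\<forall>v\<in>V. 0 \<le> s v"
  shows "\<forall>v\<in>V. raised E \<alpha> \<sigma> t v \<le> s v"
proof (induction t)
  case 0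
  then show ?case using nonneg by simp
next
  case (Suc t)
  have step: "raised E \<alpha> \<sigma> t v + rhoR E (reweight \<alpha> (raised E \<alpha> \<sigma> t)) v / 2 \<le> s v"
    if "v \<in> V" for v
  proof -
    obtain w where "(v, w) \<in> E" using strongly_connected_out_edge[OF assms(2) \<open>v \<in> V\<close>] .
    obtain u where "(u, v) \<in> E" using strongly_connected_in_edge[OF assms(2) \<open>v \<in> V\<close>] .
    have "E \<subseteq> V \<times> V" using assms(2) by (simp add: strongly_connected_def)
    from raise_le_balanced_potential[OF finite_edges[OF assms(1,2)] this \<open>(v, w) \<in> E\<close>
        \<open>(u, v) \<in> E\<close> Suc] bal that
    show ?thesis unfolding balanced_on_def by blast
  qed
  show ?case
    using step Suc by (auto simp: alpha_seq_eq_reweight)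
qed

lemma balanced_limit_potential:
  assumes "finite V" "strongly_connected V E" "fair_seq V \<sigma>"
    and lim: "\<forall>v\<in>V. (\<lambda>t. raised E \<alpha> \<sigma> t v) \<longlonglongrightarrow> rstar v"
  shows "balanced_on V E (reweight \<alpha> rstar)"
  unfolding balanced_on_def
proof (intro ballI, rule field_le_epsilon)
  fix v and e :: real
  assume "v \<in> V" "0 < e"
  define \<delta> where "\<delta> = e / 6"
  have "0 < \<delta>" using \<open>0 < e\<close> by (simp add: \<delta>_def)
  let ?r = "raised E \<alpha> \<sigma>"
  have "\<forall>\<^sub>F t in sequentially. \<forall>u\<in>V. dist (?r t u) (rstar u) < \<delta>"
    using lim \<open>0 < \<delta>\<close> by (intro eventually_ball_finite[OF assms(1)] ballI tendstoD) auto
  then obtain N where N: "\<forall>t\<ge>N. \<forall>u\<in>V. \<bar>?r t u - rstar u\<bar> \<le> \<delta>"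
    unfolding eventually_sequentially dist_real_def by (meson less_imp_le)
  obtain t where t: "t \<ge> N" "\<sigma> t = v"
    using assms(3) \<open>v \<in> V\<close> unfolding fair_seq_def by blast
  have "rhoR E (reweight \<alpha> (?r t)) v = 2 * (?r (Suc t) v - ?r t v)"
    using t(2) by (simp add: alpha_seq_eq_reweight)
  also have "\<dots> \<le> 2 * (rstar v - ?r t v)"
    by (intro mult_left_mono diff_right_mono
          incseq_le[OF incseq_raised lim[rule_format, OF \<open>v \<in> V\<close>]]) simp
  also have "\<dots> \<le> 2 * \<delta>"
    using N t(1) \<open>v \<in> V\<close> by (force simp: abs_le_iff)
  finally have rho: "rhoR E (reweight \<alpha> (?r t)) v \<le> 2 * \<delta>" .
  obtain w where "(v, w) \<in> E" using strongly_connected_out_edge[OF assms(2) \<open>v \<in> V\<close>] .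
  obtain u where "(u, v) \<in> E" using strongly_connected_in_edge[OF assms(2) \<open>v \<in> V\<close>] .
  have "E \<subseteq> V \<times> V" using assms(2) by (simp add: strongly_connected_def)
  from alpha_out_minus_alpha_in_reweight_le[OF finite_edges[OF assms(1,2)] this
      \<open>(v, w) \<in> E\<close> \<open>(u, v) \<in> E\<close>] N t(1)
  have "alpha_out E (reweight \<alpha> rstar) v - alpha_in E (reweight \<alpha> rstar) v
      \<le> rhoR E (reweight \<alpha> (?r t)) v + 4 * \<delta>" by blast
  with rho show "alpha_out E (reweight \<alpha> rstar) v \<le> alpha_in E (reweight \<alpha> rstar) v + e"
    unfolding \<delta>_def by linarith
qed

theorem corollary1:
  fixes V :: "'a set" and E :: "('a \<times> 'a) set" and \<alpha> :: "'a \<Rightarrow> 'a \<Rightarrow> real"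
    and \<sigma> :: "nat \<Rightarrow> 'a" and rstar :: "'a \<Rightarrow> real"
  assumes "finite V"
    and "strongly_connected V E"
    and "fair_seq V \<sigma>"
    and "\<forall>v\<in>V. (\<lambda>t. raised E \<alpha> \<sigma> t v) \<longlonglongrightarrow> rstar v"
  shows "Max ((\<lambda>v. - rstar v) ` V) = 0"
proof -
  have lim: "(\<lambda>t. raised E \<alpha> \<sigma> t v) \<longlonglongrightarrow> rstar v" if "v \<in> V" for v
    using assms(4) that by blast
  have nonneg: "0 \<le> rstar v" if "v \<in> V" for v
    using incseq_le[OF incseq_raised lim[OF that], of 0] by simp
  define c where "c = Min (rstar ` V)"
  have "V \<noteq> {}" using assms(2) by (simp add: strongly_connected_def)
  then have "c \<in> rstar ` V" unfolding c_def using assms(1) by simp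
  then obtain z where z: "z \<in> V" "rstar z = c" by blast
  have "\<forall>v\<in>V. 0 \<le> rstar v - c" unfolding c_def using assms(1) by simp
  moreover have "balanced_on V E (reweight \<alpha> (\<lambda>v. rstar v - c))"
    using balanced_limit_potential[OF assms] by simp
  ultimately have "raised E \<alpha> \<sigma> t z \<le> rstar z - c" for t
    using raised_le_balanced_potential[OF assms(1,2)] z(1) by blast
  then have "rstar z \<le> rstar z - c"
    by (intro LIMSEQ_le_const2[OF lim[OF z(1)]]) auto
  with z nonneg have "c = 0" by force
  show ?thesis
  proof (rule Max_eqI)
    show "finite ((\<lambda>v. - rstar v) ` V)" using assms(1) by simp
    show "y \<le> 0" if "y \<in> (\<lambda>v. - rstar v) ` V" for y using that nonneg by auto
    show "0 \<in> (\<lambda>v. - rstar v) ` V" using z \<open>c = 0\<close> by force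
  qed
qed

end
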